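(* Let $p$ be any prime, and let $n$, $m$, $s$ and $r$ be nonnegative integers such that $n\ge m$, $s\ge 1$, $1\le r\le p^s-1$ and $r$ is not divisible by $p$. Then \[ \binom{np^s}{mp^s+r}\equiv (-1)^{r-1}\, r^{-1}\,(m+1)\binom{n}{m+1}\,p^s \pmod{p^{s+1}}, \] where $r^{-1}$ denotes any integer $r'$ with $rr'\equiv 1 \pmod p$ (the inverse of $r$ modulo $p$).
   Context: Binomial coefficients follow the convention $\binom{l}{t}=0$ if $l<t$ and $\binom{0}{0}=1$. Since the right-hand side carries the factor $p^s$, the congruence modulo $p^{s+1}$ does not depend on the choice of the integer representative of $r^{-1}$ modulo $p$. *)

theory Defs
  imports "HOL-Number_Theory.Number_Theory"
begin

end

theory Submission imports Defs begin

(* Put q = p^s and k = m q + r. As p does not divide k, q divides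
   C(nq, k) = (nq / k) C(nq - 1, k - 1), and the cofactor e = C(nq, k) / q satisfies
   k e = n C(nq - 1, k - 1). Modulo p we have k = r, and Lucas' theorem in base q gives
   C(nq - 1, k - 1) = C(n - 1, m) C(q - 1, r - 1) = (-1)^(r-1) C(n - 1, m), because
   C(q - 1, j) = (-1)^j by Pascal's rule and p | C(q, j) for 0 < j < q. Hence
   e = (-1)^(r-1) r^(-1) (m + 1) C(n, m + 1) mod p, and multiplying by q lifts this
   to the stated congruence mod p^(s+1). *)

lemma prime_dvd_prime_power_choose:
  fixes p s i :: nat
  assumes p: "prime p" and i: "0 < i" "i < p ^ s"
  shows "p dvd (p ^ s choose i)"
proof (rule ccontr)
  assume "\<not> p dvd (p ^ s choose i)"
  then have "coprime (p ^ s) (p ^ s choose i)"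
    using p by (simp add: prime_imp_coprime)
  moreover have "i * (p ^ s choose i) = p ^ s * (p ^ s - 1 choose (i - 1))"
    using times_binomial_minus1_eq i(1) by blast
  then have "p ^ s dvd i * (p ^ s choose i)" by simp
  ultimately have "p ^ s dvd i" using coprime_dvd_mult_left_iff by blast
  with i show False by (simp add: nat_dvd_not_less)
qed

lemma prime_power_add_choose_cong:
  fixes p s x t :: nat
  assumes p: "prime p"
  shows "[(p ^ s + x) choose t
          = (x choose t) + (if p ^ s \<le> t then x choose (t - p ^ s) else 0)] (mod p)"
proof -
  define q where "q = p ^ s"
  define f where "f i = (q choose i) * (x choose (t - i))" for i
  define g where "g i = (if i = 0 then f 0 else 0) + (if i = q then f q else 0)" for i
  have q0: "q \<noteq> 0" using p by (simp add: q_def prime_gt_0_nat)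
  have "[f i = g i] (mod p)" for i
  proof (cases "i = 0 \<or> i = q")
    case False
    then have "p dvd f i"
      using prime_dvd_prime_power_choose[OF p, of i s]
      by (cases "i < q") (auto simp: f_def g_def q_def binomial_eq_0)
    then show ?thesis using False by (simp add: g_def cong_0_iff)
  qed (use q0 in \<open>auto simp: g_def\<close>)
  then have "[(\<Sum>i\<le>t. f i) = (\<Sum>i\<le>t. g i)] (mod p)" by (rule cong_sum)
  moreover have "(\<Sum>i\<le>t. f i) = (q + x) choose t"
    unfolding f_def by (rule vandermonde)
  moreover have "(\<Sum>i\<le>t. g i) = (x choose t) + (if q \<le> t then x choose (t - q) else 0)"
    by (simp add: g_def sum.distrib f_def)
  ultimately have "[(q + x) choose t = (x choose t) + (if q \<le> t then x choose (t - q) else 0)] (mod p)"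
    by simp
  then show ?thesis by (simp only: q_def)
qed

lemma choose_mult_add_prime_power_cong:
  fixes p s a b k j :: nat
  assumes p: "prime p" and b: "b < p ^ s" and j: "j < p ^ s"
  shows "[(a * p ^ s + b) choose (k * p ^ s + j) = (a choose k) * (b choose j)] (mod p)"
proof (induction a arbitrary: k)
  case 0
  then show ?case using b by (cases k) (auto simp: binomial_eq_0)
next
  case (Suc a)
  note IH = Suc.IH
  have add_power: "[(Suc a * p ^ s + b) choose (k * p ^ s + j)
         = ((a * p ^ s + b) choose (k * p ^ s + j))
           + (if p ^ s \<le> k * p ^ s + j then (a * p ^ s + b) choose (k * p ^ s + j - p ^ s) else 0)]
        (mod p)"
    using prime_power_add_choose_cong[OF p, of s "a * p ^ s + b"] by (simp add: add.assoc)
  show ?case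
  proof (cases k)
    case 0
    with add_power j have "[(Suc a * p ^ s + b) choose (k * p ^ s + j)
                       = (a * p ^ s + b) choose (0 * p ^ s + j)] (mod p)"
      by simp
    also note IH[of 0]
    finally show ?thesis using 0 by simp
  next
    case (Suc k')
    with add_power have "[(Suc a * p ^ s + b) choose (k * p ^ s + j)
                     = ((a * p ^ s + b) choose (k * p ^ s + j))
                       + ((a * p ^ s + b) choose (k' * p ^ s + j))] (mod p)"
      by simp
    also have "[((a * p ^ s + b) choose (k * p ^ s + j)) + ((a * p ^ s + b) choose (k' * p ^ s + j))
                = (a choose k) * (b choose j) + (a choose k') * (b choose j)] (mod p)"
      by (intro cong_add IH)
    finally show ?thesis using Suc by (simp add: algebra_simps)
  qed
qed

lemma prime_power_minus_one_choose_cong: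
  fixes p s j :: nat
  assumes p: "prime p" and j: "j < p ^ s"
  shows "[int (p ^ s - 1 choose j) = (-1) ^ j] (mod int p)"
  using j
proof (induction j)
  case (Suc j)
  have "p dvd (p ^ s choose Suc j)"
    using prime_dvd_prime_power_choose[OF p, of "Suc j" s] Suc.prems by simp
  moreover have "p ^ s choose Suc j = (p ^ s - 1 choose j) + (p ^ s - 1 choose Suc j)"
  proof -
    have "p ^ s = Suc (p ^ s - 1)" using Suc.prems by simp
    then show ?thesis by (metis binomial_Suc_Suc)
  qed
  ultimately have "[int (p ^ s - 1 choose Suc j) = - int (p ^ s - 1 choose j)] (mod int p)"
    by (simp add: cong_iff_dvd_diff add.commute flip: of_nat_add)
  moreover have "[- int (p ^ s - 1 choose j) = - ((-1) ^ j)] (mod int p)"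
    using Suc by (simp add: cong_minus_minus_iff)
  ultimately show ?case by (simp add: cong_trans)
qed simp

lemma choose_pred_mult_prime_power_cong:
  fixes p s n m j :: nat
  assumes p: "prime p" and n: "0 < n" and j: "0 < j" "j \<le> p ^ s"
  shows "[int ((n * p ^ s - 1) choose (m * p ^ s + j - 1))
          = (-1) ^ (j - 1) * int ((n - 1) choose m)] (mod int p)"
proof -
  have q: "0 < p ^ s" using p by (simp add: prime_gt_0_nat)
  obtain n' where n': "n = Suc n'" using n by (cases n) auto
  have "n * p ^ s - 1 = (n - 1) * p ^ s + (p ^ s - 1)"
    using q unfolding n' mult_Suc diff_Suc_1 by linarith
  moreover have "m * p ^ s + j - 1 = m * p ^ s + (j - 1)" using j by simp
  ultimately have "[(n * p ^ s - 1) choose (m * p ^ s + j - 1)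
                    = ((n - 1) choose m) * ((p ^ s - 1) choose (j - 1))] (mod p)"
    using choose_mult_add_prime_power_cong[OF p, of "p ^ s - 1" s "j - 1" "n - 1" m] q j by simp
  then have "[int ((n * p ^ s - 1) choose (m * p ^ s + j - 1))
              = int ((n - 1) choose m) * int ((p ^ s - 1) choose (j - 1))] (mod int p)"
    by (simp flip: cong_int_iff)
  also have "[int ((n - 1) choose m) * int ((p ^ s - 1) choose (j - 1))
              = int ((n - 1) choose m) * (-1) ^ (j - 1)] (mod int p)"
    using prime_power_minus_one_choose_cong[OF p, of "j - 1" s] j by (intro cong_scalar_left) simp
  finally show ?thesis by (simp add: mult.commute)
qed

lemma coprime_choose_mult_cofactor:
  fixes q n k :: nat
  assumes "0 < q" "0 < k" "coprime q k"
  obtains e where "(n * q) choose k = q * e" and "k * e = n * ((n * q - 1) choose (k - 1))"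
proof -
  have key: "k * ((n * q) choose k) = n * q * ((n * q - 1) choose (k - 1))"
    using times_binomial_minus1_eq[OF \<open>0 < k\<close>] .
  then have "q dvd k * ((n * q) choose k)" by simp
  with \<open>coprime q k\<close> have "q dvd (n * q) choose k"
    using coprime_dvd_mult_right_iff by blast
  then obtain e where e: "(n * q) choose k = q * e" ..
  with key \<open>0 < q\<close> have "k * e = n * ((n * q - 1) choose (k - 1))"
    by (simp add: algebra_simps)
  with e show thesis by (rule that)
qed

lemma choose_mult_prime_power_cofactor_cong:
  fixes p s n m r e :: nat and r' :: int
  assumes p: "prime p" and s: "1 \<le> s" and r: "0 < r" "r \<le> p ^ s"
    and inv: "[int r * r' = 1] (mod int p)"
    and e: "(m * p ^ s + r) * e = n * ((n * p ^ s - 1) choose (m * p ^ s + r - 1))"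
  shows "[int e = (-1) ^ (r - 1) * r' * int (m + 1) * int (n choose (m + 1))] (mod int p)"
proof (cases "n = 0")
  case True
  with e r show ?thesis by simp
next
  case False
  have "[int (m * p ^ s + r) = int r] (mod int p)"
    using s by (simp add: cong_iff_dvd_diff dvd_power)
  then have "[r' * int (m * p ^ s + r) = 1] (mod int p)"
    using inv by (metis cong_scalar_left cong_trans mult.commute)
  then have "[r' * int (m * p ^ s + r) * int e = int e] (mod int p)"
    using cong_scalar_right by fastforce
  then have "[int e = r' * int n * int ((n * p ^ s - 1) choose (m * p ^ s + r - 1))] (mod int p)"
    using arg_cong[OF e, of int] by (simp add: cong_sym_eq mult.assoc)
  also have "[r' * int n * int ((n * p ^ s - 1) choose (m * p ^ s + r - 1))
              = r' * int n * ((-1) ^ (r - 1) * int ((n - 1) choose m))] (mod int p)"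
    using choose_pred_mult_prime_power_cong[OF p _ r] False by (intro cong_scalar_left) simp
  also have "r' * int n * ((-1) ^ (r - 1) * int ((n - 1) choose m))
             = (-1) ^ (r - 1) * r' * int (n * ((n - 1) choose m))"
    by (simp only: of_nat_mult mult_ac)
  also have "n * ((n - 1) choose m) = (m + 1) * (n choose (m + 1))"
    using times_binomial_minus1_eq[of "m + 1" n] by simp
  finally show ?thesis by (simp only: of_nat_mult mult.assoc)
qed

theorem theorem1p1:
  fixes p n m s r :: nat and r' :: int
  assumes "prime p"
    and "m \<le> n"
    and "1 \<le> s"
    and "1 \<le> r" and "r \<le> p ^ s - 1"
    and "\<not> p dvd r"
    and "[int r * r' = 1] (mod int p)"
  shows "[int ((n * p ^ s) choose (m * p ^ s + r))
          = (-1) ^ (r - 1) * r' * int (m + 1) * int (n choose (m + 1)) * int p ^ s]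
          (mod int p ^ (s + 1))"
proof -
  have "p dvd m * p ^ s"
    using assms(3) by (simp add: dvd_power)
  with assms(6) have "\<not> p dvd m * p ^ s + r"
    by (simp add: dvd_add_right_iff)
  then have coprime: "coprime (p ^ s) (m * p ^ s + r)"
    using assms(1) by (simp add: prime_imp_coprime)
  have "0 < p ^ s" "0 < m * p ^ s + r"
    using assms(1,4) by (simp_all add: prime_gt_0_nat)
  then obtain e where choose_eq: "(n * p ^ s) choose (m * p ^ s + r) = p ^ s * e"
    and cofactor: "(m * p ^ s + r) * e = n * ((n * p ^ s - 1) choose (m * p ^ s + r - 1))"
    by (rule coprime_choose_mult_cofactor[OF _ _ coprime])
  have "[int e = (-1) ^ (r - 1) * r' * int (m + 1) * int (n choose (m + 1))] (mod int p)"
    using assms(4,5)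
    by (intro choose_mult_prime_power_cofactor_cong[OF assms(1,3) _ _ assms(7) cofactor]) simp_all
  then have "[int p ^ s * int e
              = int p ^ s * ((-1) ^ (r - 1) * r' * int (m + 1) * int (n choose (m + 1)))]
             (mod int p ^ s * int p)"
    by (rule cong_cmult_leftI)
  then show ?thesis by (simp add: choose_eq mult_ac)
qed

end
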